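(* Let $M_1=(E,r_1)$ and $M_2=(E,r_2)$ be demi-matroids on the same finite ground set $E$ such that $r_2(X)\le r_1(X)$ for all $X\subseteq E$. Define $\rho(X)=r_1(X)-r_2(X)$ for $X\subseteq E$. Then $(E,\rho)$ is a demi-matroid if and only if $\mathcal{E}_{M_1}\subseteq \mathcal{E}_{M_2}$.
   Context: A demi-matroid is a pair $(E,r)$ with $E$ a finite set and $r:2^E\to\mathbb{N}$ satisfying (R1) $r(\emptyset)=0$ and (R2) for every $X\subseteq E$ and $x\in E$, $r(X)\le r(X\cup\{x\})\le r(X)+1$. For a demi-matroid $M=(E,r)$, $\mathcal{E}_M=\{(X,x): X\subseteq E,\ x\in X,\ r(X\setminus\{x\})=r(X)\}$. *)

theory Defs
  imports Main
begin

definition demi_matroid :: "'a set \<Rightarrow> ('a set \<Rightarrow> nat) \<Rightarrow> bool" where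
  "demi_matroid E r \<longleftrightarrow> finite E \<and> r {} = 0 \<and>
     (\<forall>X x. X \<subseteq> E \<and> x \<in> E \<longrightarrow> r X \<le> r (insert x X) \<and> r (insert x X) \<le> r X + 1)"

definition calE :: "'a set \<Rightarrow> ('a set \<Rightarrow> nat) \<Rightarrow> ('a set \<times> 'a) set" where
  "calE E r = {(X, x). X \<subseteq> E \<and> x \<in> X \<and> r (X - {x}) = r X}"

end

theory Submission
  imports Defs
begin

text \<open>Adding an element raises both ranks by 0 or 1. The difference can then never grow by
  more than 1, and it drops exactly when r1 stays put while r2 increases; such a step
  is precisely a pair in calE E r1 but not in calE E r2.\<close>

lemma demi_matroidD:
  assumes "demi_matroid E r" "X \<subseteq> E" "x \<in> E"
  shows "r X \<le> r (insert x X)" "r (insert x X) \<le> r X + 1"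
  using assms by (auto simp: demi_matroid_def)

lemma demi_matroid_iff_mono_insert:
  assumes "finite E" "r {} = 0"
    and "\<And>X x. X \<subseteq> E \<Longrightarrow> x \<in> E \<Longrightarrow> r (insert x X) \<le> r X + 1"
  shows "demi_matroid E r \<longleftrightarrow> (\<forall>X x. X \<subseteq> E \<and> x \<in> E \<longrightarrow> r X \<le> r (insert x X))"
  using assms by (auto simp: demi_matroid_def)

lemma calE_subset_iff_insert:
  "calE E r1 \<subseteq> calE E r2 \<longleftrightarrow>
     (\<forall>X x. X \<subseteq> E \<and> x \<in> E \<and> x \<notin> X \<and> r1 (insert x X) = r1 X
        \<longrightarrow> r2 (insert x X) = r2 X)"
proof
  assume sub: "calE E r1 \<subseteq> calE E r2"
  show "\<forall>X x. X \<subseteq> E \<and> x \<in> E \<and> x \<notin> X \<and> r1 (insert x X) = r1 X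
          \<longrightarrow> r2 (insert x X) = r2 X"
  proof (intro allI impI)
    fix X x assume h: "X \<subseteq> E \<and> x \<in> E \<and> x \<notin> X \<and> r1 (insert x X) = r1 X"
    then have "insert x X - {x} = X" by auto
    with h have "(insert x X, x) \<in> calE E r1" by (auto simp: calE_def)
    with sub have "(insert x X, x) \<in> calE E r2" by blast
    with \<open>insert x X - {x} = X\<close> show "r2 (insert x X) = r2 X"
      by (simp add: calE_def)
  qed
next
  assume ins: "\<forall>X x. X \<subseteq> E \<and> x \<in> E \<and> x \<notin> X \<and> r1 (insert x X) = r1 X
                  \<longrightarrow> r2 (insert x X) = r2 X"
  show "calE E r1 \<subseteq> calE E r2"
  proof (clarsimp simp: calE_def)
    fix Y x assume "Y \<subseteq> E" "x \<in> Y" "r1 (Y - {x}) = r1 Y"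
    moreover have Y: "insert x (Y - {x}) = Y" using \<open>x \<in> Y\<close> by blast
    ultimately have "r2 (insert x (Y - {x})) = r2 (Y - {x})"
      using ins by (metis Diff_iff Diff_subset insertI1 subset_trans subsetD)
    then show "r2 (Y - {x}) = r2 Y" by (simp only: Y)
  qed
qed

lemma diff_step_le_Suc:
  fixes a a' b b' :: nat
  assumes "a \<le> a'" "a' \<le> a + 1" "b \<le> b'" "b' \<le> a'"
  shows "a' - b' \<le> a - b + 1"
  using assms by linarith

lemma diff_step_mono_iff:
  fixes a a' b b' :: nat
  assumes "a \<le> a'" "a' \<le> a + 1" "b \<le> b'" "b' \<le> b + 1" "b \<le> a" "b' \<le> a'"
  shows "a - b \<le> a' - b' \<longleftrightarrow> (a' = a \<longrightarrow> b' = b)"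
  using assms by linarith

lemma rank_diff_insert_le_Suc:
  assumes "demi_matroid E r1" "demi_matroid E r2" "\<forall>X. X \<subseteq> E \<longrightarrow> r2 X \<le> r1 X"
    and "X \<subseteq> E" "x \<in> E"
  shows "r1 (insert x X) - r2 (insert x X) \<le> r1 X - r2 X + 1"
proof -
  have "insert x X \<subseteq> E" using assms(4,5) by blast
  then have "r2 (insert x X) \<le> r1 (insert x X)" using assms(3) by blast
  then show ?thesis
    using diff_step_le_Suc[OF demi_matroidD[OF assms(1,4,5)] demi_matroidD(1)[OF assms(2,4,5)]]
    by blast
qed

lemma rank_diff_mono_insert_iff:
  assumes "demi_matroid E r1" "demi_matroid E r2" "\<forall>X. X \<subseteq> E \<longrightarrow> r2 X \<le> r1 X"
    and "X \<subseteq> E" "x \<in> E"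
  shows "r1 X - r2 X \<le> r1 (insert x X) - r2 (insert x X)
           \<longleftrightarrow> (x \<notin> X \<and> r1 (insert x X) = r1 X \<longrightarrow> r2 (insert x X) = r2 X)"
proof (cases "x \<in> X")
  case True
  then show ?thesis by (simp add: insert_absorb)
next
  case False
  have "insert x X \<subseteq> E" using assms(4,5) by blast
  then have "r2 (insert x X) \<le> r1 (insert x X)" "r2 X \<le> r1 X" using assms(3,4) by blast+
  with False show ?thesis
    using diff_step_mono_iff[OF demi_matroidD[OF assms(1,4,5)] demi_matroidD[OF assms(2,4,5)]]
    by simp
qed

theorem mainTheorem1:
  fixes E :: "'a set" and r1 r2 :: "'a set \<Rightarrow> nat"
  assumes "finite E"
    and "demi_matroid E r1" and "demi_matroid E r2"
    and "\<forall>X. X \<subseteq> E \<longrightarrow> r2 X \<le> r1 X"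
  shows "demi_matroid E (\<lambda>X. r1 X - r2 X) \<longleftrightarrow> calE E r1 \<subseteq> calE E r2"
proof -
  have "r1 {} - r2 {} = 0"
    using assms(2,3) by (simp add: demi_matroid_def)
  then have "demi_matroid E (\<lambda>X. r1 X - r2 X) \<longleftrightarrow>
      (\<forall>X x. X \<subseteq> E \<and> x \<in> E \<longrightarrow> r1 X - r2 X \<le> r1 (insert x X) - r2 (insert x X))"
    by (intro demi_matroid_iff_mono_insert[OF assms(1)] rank_diff_insert_le_Suc[OF assms(2-4)])
  also have "\<dots> \<longleftrightarrow> calE E r1 \<subseteq> calE E r2"
    unfolding calE_subset_iff_insert by (simp add: rank_diff_mono_insert_iff[OF assms(2-4)] imp_conjL)
  finally show ?thesis .
qed

end
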